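(* Let $n\ge 2$ and set $k=\lfloor \log_2 n\rfloor$. Then $v(n)\le n-k$ if $n$ and $k$ have different parity, and $v(n)\le n-k+1$ otherwise.
   Context: A voter on a finite candidate set $A$ is a linear order (ranking) of $A$. A set of voters is a nonempty finite multiset of voters. A strong preference pattern on $A$ is a tournament $T$ on vertex set $A$. A set of voters $U$ generates $T$ if for every pair of distinct candidates $x,y$, the arc $(x,y)$ is in $T$ if and only if strictly more voters of $U$ rank $x$ above $y$ than rank $y$ above $x$. For a tournament $T$, $v(T)$ denotes the minimum size of a set of voters generating $T$, and $v(n)=\max\{v(T): T \text{ a tournament on } n \text{ vertices}\}$. *)

theory Defs
  imports Complex_Main "HOL-Library.Multiset"
begin

text \<open>A voter on a finite candidate set A is a linear order on A, given as a relation
  r with (x,y) \<in> r meaning "x is ranked above (or equal to) y".\<close>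
definition voter :: "'a set \<Rightarrow> 'a rel \<Rightarrow> bool" where
  "voter A r \<longleftrightarrow> linear_order_on A r"

definition tournament :: "'a set \<Rightarrow> 'a rel \<Rightarrow> bool" where
  "tournament A T \<longleftrightarrow> T \<subseteq> A \<times> A \<and> (\<forall>x\<in>A. (x, x) \<notin> T) \<and>
     (\<forall>x\<in>A. \<forall>y\<in>A. x \<noteq> y \<longrightarrow> ((x, y) \<in> T \<longleftrightarrow> (y, x) \<notin> T))"

definition n_prefer :: "'a rel multiset \<Rightarrow> 'a \<Rightarrow> 'a \<Rightarrow> nat" where
  "n_prefer U x y = size (filter_mset (\<lambda>r. (x, y) \<in> r \<and> x \<noteq> y) U)"

definition generates :: "'a set \<Rightarrow> 'a rel multiset \<Rightarrow> 'a rel \<Rightarrow> bool" where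
  "generates A U T \<longleftrightarrow> U \<noteq> {#} \<and> (\<forall>r\<in>#U. voter A r) \<and>
     (\<forall>x\<in>A. \<forall>y\<in>A. x \<noteq> y \<longrightarrow> ((x, y) \<in> T \<longleftrightarrow> n_prefer U x y > n_prefer U y x))"

definition vT :: "'a set \<Rightarrow> 'a rel \<Rightarrow> nat" where
  "vT A T = (LEAST m. \<exists>U. generates A U T \<and> size U = m)"

definition vn :: "nat \<Rightarrow> nat" where
  "vn n = Max {vT {0..<n} T | T. tournament {0..<n} T}"

end

theory Submission
  imports Defs
begin

text \<open>Every tournament on at least \<open>2^j\<close> vertices contains a transitive subtournament on \<open>j + 1\<close>
  vertices (pick a vertex and recurse into its larger neighbourhood), and a transitive tournament
  is generated by a single voter. If the number of remaining vertices is even, they can be added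
  two at a time while adding two voters: keep the old voters on the old candidates, let \<open>m\<close> of
  them put the new candidates \<open>u, w\<close> on top and the other \<open>m + 1\<close> at the bottom, so that \<open>u\<close> and
  \<open>w\<close> are one vote short against every old candidate; two new voters that are mutually reversed
  on the old candidates then settle each new comparison as prescribed. Choosing \<open>j = k\<close> or
  \<open>j = k - 1\<close> according to parity yields \<open>n - j\<close> voters.\<close>

definition score_rel :: "'a set \<Rightarrow> ('a \<Rightarrow> int) \<Rightarrow> 'a rel" where
  "score_rel A f = {(x, y). x \<in> A \<and> y \<in> A \<and> f y \<le> f x}"

definition wins :: "('a \<Rightarrow> int) list \<Rightarrow> 'a \<Rightarrow> 'a \<Rightarrow> nat" where
  "wins fs x y = length (filter (\<lambda>f. f y < f x) fs)"

definition scores_generate :: "'a set \<Rightarrow> 'a rel \<Rightarrow> ('a \<Rightarrow> int) list \<Rightarrow> bool" where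
  "scores_generate A T fs \<longleftrightarrow> (\<forall>f\<in>set fs. inj_on f A) \<and>
     (\<forall>x\<in>A. \<forall>y\<in>A. x \<noteq> y \<longrightarrow> ((x, y) \<in> T \<longleftrightarrow> wins fs y x < wins fs x y))"

definition ranking_of :: "'a rel \<Rightarrow> 'a set \<Rightarrow> ('a \<Rightarrow> int) \<Rightarrow> bool" where
  "ranking_of T S f \<longleftrightarrow> inj_on f S \<and> (\<forall>x\<in>S. \<forall>y\<in>S. x \<noteq> y \<longrightarrow> ((x, y) \<in> T \<longleftrightarrow> f y < f x))"

lemma wins_append [simp]: "wins (fs @ gs) x y = wins fs x y + wins gs x y"
  by (simp add: wins_def)

lemma wins_const:
  assumes "\<forall>f\<in>set fs. f y < f x \<longleftrightarrow> b"
  shows "wins fs x y = (if b then length fs else 0)"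
  using assms by (simp add: wins_def filter_empty_conv)

lemma wins_map_cong:
  assumes "\<forall>f\<in>set fs. g f x = f x \<and> g f y = f y"
  shows "wins (map g fs) x y = wins fs x y"
  using assms by (induction fs) (auto simp: wins_def)

lemma wins_swap:
  assumes "\<forall>f\<in>set fs. f x \<noteq> f y"
  shows "wins fs x y + wins fs y x = length fs"
  using assms by (induction fs) (auto simp: wins_def)

lemma finite_bounded_int:
  assumes "finite S"
  shows "\<exists>M::int. \<forall>z\<in>S. \<bar>g z\<bar> < M"
proof (intro exI ballI)
  show "\<bar>g z\<bar> < 1 + (\<Sum>z\<in>S. \<bar>g z\<bar>)" if "z \<in> S" for z
    using member_le_sum[of z S "\<lambda>z. \<bar>g z\<bar>"] that assms by simp
qed

lemma scores_generate_single: "ranking_of T S f \<Longrightarrow> scores_generate S T [f]"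
  by (auto simp: ranking_of_def scores_generate_def wins_def inj_on_def)

lemma ranking_of_insert:
  assumes rk: "ranking_of T S f" and "finite S" "v \<notin> S"
    and side: "\<forall>z\<in>S. (v, z) \<in> T \<longleftrightarrow> dominates"
    and tour: "\<forall>z\<in>S. (z, v) \<in> T \<longleftrightarrow> (v, z) \<notin> T"
  shows "\<exists>g. ranking_of T (insert v S) g"
proof -
  obtain M where M: "\<forall>z\<in>S. \<bar>f z\<bar> < M" using finite_bounded_int[OF \<open>finite S\<close>] by blast
  define g where "g = f(v := if dominates then M else - M)"
  have gS: "z \<in> S \<Longrightarrow> g z = f z" for z using \<open>v \<notin> S\<close> by (auto simp: g_def)
  have gv: "(g z < g v \<longleftrightarrow> dominates) \<and> g z \<noteq> g v" if "z \<in> S" for z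
    using M gS[OF that] that by (auto simp: g_def abs_less_iff)
  have "ranking_of T (insert v S) g"
    using rk side tour gS gv unfolding ranking_of_def inj_on_def
    by (smt (verit) insert_iff)
  then show ?thesis by blast
qed

lemma tournament_flip:
  "tournament A T \<Longrightarrow> x \<in> A \<Longrightarrow> y \<in> A \<Longrightarrow> x \<noteq> y \<Longrightarrow> (y, x) \<in> T \<longleftrightarrow> (x, y) \<notin> T"
  unfolding tournament_def by blast

lemma tournament_transitive_subset:
  assumes tour: "tournament A T" and "B \<subseteq> A" "finite B" "2 ^ k \<le> card B"
  shows "\<exists>S\<subseteq>B. card S = k + 1 \<and> (\<exists>f. ranking_of T S f)"
  using assms(2-4)
proof (induction k arbitrary: B)
  case 0
  then obtain v where "v \<in> B" by (metis card.empty ex_in_conv not_one_le_zero power_0)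
  moreover have "ranking_of T {v} f" for f by (simp add: ranking_of_def)
  ultimately show ?case by (intro exI[of _ "{v}"]) auto
next
  case (Suc k)
  then obtain v where v: "v \<in> B"
    by (metis card.empty ex_in_conv not_one_le_zero one_le_power one_le_numeral order_trans)
  define C where "C d = {z \<in> B - {v}. (v, z) \<in> T \<longleftrightarrow> d}" for d
  have fin: "finite (C d)" for d using Suc.prems(2) by (auto simp: C_def)
  have "C True \<union> C False = B - {v}" "C True \<inter> C False = {}" by (auto simp: C_def)
  then have "card (C True) + card (C False) = card B - 1"
    using card_Un_disjoint[OF fin fin, of True False] v Suc.prems(2) by simp
  moreover have "2 * 2 ^ k \<le> card B" using Suc.prems(3) by simp
  ultimately have "2 ^ k \<le> card (C True) \<or> 2 ^ k \<le> card (C False)" by linarith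
  then obtain d where d: "2 ^ k \<le> card (C d)" by blast
  have "C d \<subseteq> A" using Suc.prems(1) by (auto simp: C_def)
  then obtain S f where S: "S \<subseteq> C d" "card S = k + 1" "ranking_of T S f"
    using Suc.IH[OF _ fin d] by blast
  have "finite S" "v \<notin> S" using S(1) fin finite_subset by (auto simp: C_def)
  moreover have "\<forall>z\<in>S. (z, v) \<in> T \<longleftrightarrow> (v, z) \<notin> T"
    using S(1) v Suc.prems(1) tournament_flip[OF tour] unfolding C_def by blast
  moreover have "\<forall>z\<in>S. (v, z) \<in> T \<longleftrightarrow> d" using S(1) by (auto simp: C_def)
  ultimately obtain g where "ranking_of T (insert v S) g"
    using ranking_of_insert[OF S(3)] by blast
  moreover have "insert v S \<subseteq> B" using S(1) v by (auto simp: C_def)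
  moreover have "card (insert v S) = Suc k + 1" using S(2) \<open>finite S\<close> \<open>v \<notin> S\<close> by simp
  ultimately show ?case by blast
qed

lemma inj_on_insert_pair:
  assumes "inj_on f B" "f u \<noteq> f w" "\<forall>z\<in>B. f z \<noteq> f u \<and> f z \<noteq> f w"
  shows "inj_on f (insert u (insert w B))"
  using assms by (auto simp: inj_on_def)

lemma extend_score_pair_extreme:
  fixes f :: "'a \<Rightarrow> int"
  assumes "finite B" "inj_on f B" "u \<notin> B" "w \<notin> B" "u \<noteq> w"
  shows "\<exists>f'. inj_on f' (insert u (insert w B)) \<and> (\<forall>x\<in>B. f' x = f x) \<and>
    (\<forall>z\<in>B. f z < f' u \<longleftrightarrow> high) \<and> (\<forall>z\<in>B. f z < f' w \<longleftrightarrow> high) \<and> (f' w < f' u \<longleftrightarrow> u_first)"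
proof -
  obtain M where M: "\<forall>z\<in>B. \<bar>f z\<bar> < M" using finite_bounded_int[OF \<open>finite B\<close>] by blast
  define s where "s = (if high then M else - M - 3)"
  define f' where "f' = f(u := s + (if u_first then 2 else 1), w := s + (if u_first then 1 else 2))"
  have f'B: "x \<in> B \<Longrightarrow> f' x = f x" for x using assms(3,4) by (auto simp: f'_def)
  have u: "f' u = s + (if u_first then 2 else 1)" and w: "f' w = s + (if u_first then 1 else 2)"
    using assms(5) by (simp_all add: f'_def)
  have above: "f z < f' u \<longleftrightarrow> high" "f z < f' w \<longleftrightarrow> high" "f z \<noteq> f' u" "f z \<noteq> f' w" if "z \<in> B" for z
    using M that unfolding u w s_def by (auto simp: abs_less_iff)
  have "inj_on f' B" using assms(2) f'B by (simp add: inj_on_def)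
  moreover have "f' u \<noteq> f' w" using u w by simp
  ultimately have "inj_on f' (insert u (insert w B))"
    using above f'B by (intro inj_on_insert_pair) auto
  moreover have "f' w < f' u \<longleftrightarrow> u_first" using u w by simp
  ultimately show ?thesis using f'B above by blast
qed

lemma reversed_score_pair:
  fixes P Q :: "'a \<Rightarrow> bool"
  assumes "finite B" "u \<notin> B" "w \<notin> B" "u \<noteq> w"
  shows "\<exists>\<sigma> \<tau> :: 'a \<Rightarrow> int.
    inj_on \<sigma> (insert u (insert w B)) \<and> inj_on \<tau> (insert u (insert w B)) \<and>
    (\<forall>x\<in>B. \<forall>y\<in>B. \<sigma> y < \<sigma> x \<longleftrightarrow> \<tau> x < \<tau> y) \<and>
    (\<forall>z\<in>B. wins [\<sigma>, \<tau>] u z = (if P z then 2 else 1)) \<and>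
    (\<forall>z\<in>B. wins [\<sigma>, \<tau>] w z = (if Q z then 2 else 1)) \<and> wins [\<sigma>, \<tau>] u w = 1"
proof -
  obtain g :: "'a \<Rightarrow> nat" and N where g: "g ` B = {i. i < N}" "inj_on g B"
    using finite_imp_inj_to_nat_seg[OF assms(1)] by blast
  define M :: int where "M = int N + 1"
  have g_bound: "0 \<le> int (g z) \<and> int (g z) < M" if "z \<in> B" for z
  proof -
    have "g z < N" using g(1) that by blast
    then show ?thesis by (simp add: M_def)
  qed
  \<comment> \<open>the offset of \<open>h z\<close> encodes \<open>(P z, Q z)\<close>, placing \<open>z\<close> on the required sides of the
    fixed scores of \<open>u\<close> and \<open>w\<close> in \<open>\<sigma>\<close> and \<open>\<tau>\<close>\<close>
  define h where "h z = (if P z then if Q z then 8 else 12 else if Q z then 4 else 0) * M + int (g z)" for z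
  have h_cmp: "h z < 10 * M \<longleftrightarrow> \<not> (P z \<and> \<not> Q z)" "6 * M < h z \<longleftrightarrow> P z"
    "2 * M < h z \<longleftrightarrow> P z \<or> Q z" "h z \<notin> {2 * M, 6 * M, 10 * M}" "h z < 20 * M"
    if "z \<in> B" for z
    using g_bound[OF that] by (cases "P z"; cases "Q z"; simp add: h_def)+
  have "inj_on h B"
  proof (rule inj_onI)
    fix x y assume xy: "x \<in> B" "y \<in> B" "h x = h y"
    then have "g x = g y"
      using g_bound[OF xy(1)] g_bound[OF xy(2)]
      by (cases "P x"; cases "Q x"; cases "P y"; cases "Q y"; simp add: h_def)
    then show "x = y" using g(2) xy(1,2) by (simp add: inj_on_def)
  qed
  define \<sigma> where "\<sigma> = h(u := 20 * M, w := 10 * M)"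
  define \<tau> where "\<tau> = (\<lambda>z. - h z)(u := - 6 * M, w := - 2 * M)"
  have B_vals: "\<sigma> z = h z" "\<tau> z = - h z" if "z \<in> B" for z
    using assms(2,3) that by (auto simp: \<sigma>_def \<tau>_def)
  have uw_vals: "\<sigma> u = 20 * M" "\<sigma> w = 10 * M" "\<tau> u = - 6 * M" "\<tau> w = - 2 * M"
    using assms(4) by (simp_all add: \<sigma>_def \<tau>_def)
  have M_pos: "0 < M" by (simp add: M_def)
  have "inj_on \<sigma> B" "inj_on \<tau> B"
    using \<open>inj_on h B\<close> B_vals by (auto simp: inj_on_def)
  moreover have "\<forall>z\<in>B. \<sigma> z \<noteq> \<sigma> u \<and> \<sigma> z \<noteq> \<sigma> w \<and> \<tau> z \<noteq> \<tau> u \<and> \<tau> z \<noteq> \<tau> w"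
  proof
    fix z assume "z \<in> B"
    then show "\<sigma> z \<noteq> \<sigma> u \<and> \<sigma> z \<noteq> \<sigma> w \<and> \<tau> z \<noteq> \<tau> u \<and> \<tau> z \<noteq> \<tau> w"
      using B_vals[OF \<open>z \<in> B\<close>] uw_vals h_cmp(4,5)[OF \<open>z \<in> B\<close>] by auto
  qed
  ultimately have "inj_on \<sigma> (insert u (insert w B))" "inj_on \<tau> (insert u (insert w B))"
    using uw_vals M_pos by (auto intro!: inj_on_insert_pair)
  moreover have "\<forall>x\<in>B. \<forall>y\<in>B. \<sigma> y < \<sigma> x \<longleftrightarrow> \<tau> x < \<tau> y" using B_vals by simp
  moreover have "wins [\<sigma>, \<tau>] u z = (if P z then 2 else 1)" "wins [\<sigma>, \<tau>] w z = (if Q z then 2 else 1)"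
    if "z \<in> B" for z
    using h_cmp[OF that] B_vals[OF that] uw_vals by (auto simp: wins_def)
  moreover have "wins [\<sigma>, \<tau>] u w = 1" using uw_vals M_pos by (simp add: wins_def)
  ultimately show ?thesis by blast
qed

lemma scores_split_pair_extreme:
  assumes fin: "finite B" and inj: "\<forall>f\<in>set fs. inj_on f B" and new: "u \<notin> B" "w \<notin> B" "u \<noteq> w"
    and "m \<le> length fs"
  shows "\<exists>gs. length gs = length fs \<and> (\<forall>g\<in>set gs. inj_on g (insert u (insert w B))) \<and>
    (\<forall>x\<in>B. \<forall>y\<in>B. wins gs x y = wins fs x y) \<and> (\<forall>z\<in>B. wins gs u z = m \<and> wins gs w z = m) \<and>
    wins gs u w = (if u_first then length fs else 0)"
proof -
  define C where "C = insert u (insert w B)"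
  have "\<forall>f\<in>set fs. \<exists>f'. inj_on f' C \<and> (\<forall>x\<in>B. f' x = f x) \<and> (\<forall>z\<in>B. f z < f' u \<longleftrightarrow> high) \<and>
      (\<forall>z\<in>B. f z < f' w \<longleftrightarrow> high) \<and> (f' w < f' u \<longleftrightarrow> u_first)" for high
  proof
    fix f assume "f \<in> set fs"
    then show "\<exists>f'. inj_on f' C \<and> (\<forall>x\<in>B. f' x = f x) \<and> (\<forall>z\<in>B. f z < f' u \<longleftrightarrow> high) \<and>
      (\<forall>z\<in>B. f z < f' w \<longleftrightarrow> high) \<and> (f' w < f' u \<longleftrightarrow> u_first)"
      using extend_score_pair_extreme[OF fin bspec[OF inj \<open>f \<in> set fs\<close>] new, of high u_first]
      unfolding C_def by simp
  qed
  from this[of True, THEN bchoice] this[of False, THEN bchoice]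
  obtain \<Phi> \<Psi> where
    \<Phi>: "\<forall>f\<in>set fs. inj_on (\<Phi> f) C \<and> (\<forall>x\<in>B. \<Phi> f x = f x) \<and> (\<forall>z\<in>B. f z < \<Phi> f u) \<and>
      (\<forall>z\<in>B. f z < \<Phi> f w) \<and> (\<Phi> f w < \<Phi> f u \<longleftrightarrow> u_first)" and
    \<Psi>: "\<forall>f\<in>set fs. inj_on (\<Psi> f) C \<and> (\<forall>x\<in>B. \<Psi> f x = f x) \<and> (\<forall>z\<in>B. \<not> f z < \<Psi> f u) \<and>
      (\<forall>z\<in>B. \<not> f z < \<Psi> f w) \<and> (\<Psi> f w < \<Psi> f u \<longleftrightarrow> u_first)"
    by auto
  define tops where "tops = map \<Phi> (take m fs)"
  define bots where "bots = map \<Psi> (drop m fs)"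
  have take_drop: "set (take m fs) \<subseteq> set fs" "set (drop m fs) \<subseteq> set fs"
    by (simp_all add: set_take_subset set_drop_subset)
  have "length (tops @ bots) = length fs" by (simp add: tops_def bots_def)
  moreover have "\<forall>g\<in>set (tops @ bots). inj_on g C"
    using \<Phi> \<Psi> take_drop by (auto simp: tops_def bots_def)
  moreover have "wins (tops @ bots) x y = wins fs x y" if "x \<in> B" "y \<in> B" for x y
  proof -
    have "wins tops x y = wins (take m fs) x y" "wins bots x y = wins (drop m fs) x y"
      using \<Phi> \<Psi> take_drop that unfolding tops_def bots_def by (subst wins_map_cong; force)+
    then show ?thesis by (metis append_take_drop_id wins_append)
  qed
  moreover have "wins (tops @ bots) u z = m \<and> wins (tops @ bots) w z = m" if "z \<in> B" for z
  proof -
    have "wins tops u z = m" "wins tops w z = m" "wins bots u z = 0" "wins bots w z = 0"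
      using \<Phi> \<Psi> take_drop that \<open>m \<le> length fs\<close> unfolding tops_def bots_def
      by (subst wins_const; force)+
    then show ?thesis by simp
  qed
  moreover have "wins (tops @ bots) u w = (if u_first then length fs else 0)"
  proof -
    have "wins tops u w = (if u_first then m else 0)"
      "wins bots u w = (if u_first then length fs - m else 0)"
      using \<Phi> \<Psi> take_drop \<open>m \<le> length fs\<close> unfolding tops_def bots_def
      by (subst wins_const; force)+
    then show ?thesis using \<open>m \<le> length fs\<close> by simp
  qed
  ultimately show ?thesis unfolding C_def by blast
qed

lemma scores_generate_insert_pair:
  assumes tour: "tournament A T" and sub: "insert u (insert w B) \<subseteq> A" and fin: "finite B"
    and new: "u \<notin> B" "w \<notin> B" "u \<noteq> w"
    and gen: "scores_generate B T fs" and odd: "odd (length fs)"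
  shows "\<exists>fs'. length fs' = length fs + 2 \<and> scores_generate (insert u (insert w B)) T fs'"
proof -
  define C where "C = insert u (insert w B)"
  define m where "m = length fs div 2"
  have len_fs: "length fs = 2 * m + 1" using odd by (simp add: m_def)
  have inj: "\<forall>f\<in>set fs. inj_on f B" and old:
    "\<And>x y. x \<in> B \<Longrightarrow> y \<in> B \<Longrightarrow> x \<noteq> y \<Longrightarrow> (x, y) \<in> T \<longleftrightarrow> wins fs y x < wins fs x y"
    using gen by (auto simp: scores_generate_def)
  obtain gs where gs: "length gs = length fs" "\<forall>g\<in>set gs. inj_on g C"
    "\<forall>x\<in>B. \<forall>y\<in>B. wins gs x y = wins fs x y" "\<forall>z\<in>B. wins gs u z = m \<and> wins gs w z = m"
    "wins gs u w = (if (u, w) \<in> T then length fs else 0)"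
    using scores_split_pair_extreme[OF fin inj new, of m "(u, w) \<in> T", folded C_def] len_fs
    by auto
  obtain \<sigma> \<tau> where \<sigma>\<tau>: "inj_on \<sigma> C" "inj_on \<tau> C" "\<forall>x\<in>B. \<forall>y\<in>B. \<sigma> y < \<sigma> x \<longleftrightarrow> \<tau> x < \<tau> y"
    "\<forall>z\<in>B. wins [\<sigma>, \<tau>] u z = (if (u, z) \<in> T then 2 else 1)"
    "\<forall>z\<in>B. wins [\<sigma>, \<tau>] w z = (if (w, z) \<in> T then 2 else 1)" "wins [\<sigma>, \<tau>] u w = 1"
    using reversed_score_pair[OF fin new, of "\<lambda>z. (u, z) \<in> T" "\<lambda>z. (w, z) \<in> T", folded C_def]
    by (elim exE conjE) (rule that; assumption)
  define fs' where "fs' = gs @ [\<sigma>, \<tau>]"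
  have len': "length fs' = length fs + 2" using gs(1) by (simp add: fs'_def)
  have inj': "\<forall>f\<in>set fs'. inj_on f C" using gs(2) \<sigma>\<tau>(1,2) by (simp add: fs'_def)
  have swap: "wins fs' y x = length fs + 2 - wins fs' x y" if "x \<in> C" "y \<in> C" "x \<noteq> y" for x y
  proof -
    have "\<forall>f\<in>set fs'. f x \<noteq> f y" using inj' that by (meson inj_onD)
    then show ?thesis using wins_swap[of fs' x y] len' by linarith
  qed
  have wins_BB: "wins fs' x y = wins fs x y + 1" if "x \<in> B" "y \<in> B" "x \<noteq> y" for x y
  proof -
    have "\<sigma> x \<noteq> \<sigma> y" "\<tau> x \<noteq> \<tau> y" using \<sigma>\<tau>(1,2) that by (auto simp: C_def dest: inj_onD)
    then have "wins [\<sigma>, \<tau>] x y = 1" using \<sigma>\<tau>(3) that by (auto simp: wins_def)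
    then show ?thesis using gs(3) that by (simp add: fs'_def)
  qed
  have wins_uz: "wins fs' u z = m + (if (u, z) \<in> T then 2 else 1)"
    and wins_wz: "wins fs' w z = m + (if (w, z) \<in> T then 2 else 1)" if "z \<in> B" for z
    using gs(4) \<sigma>\<tau>(4,5) that by (simp_all add: fs'_def)
  have wins_uw: "wins fs' u w = (if (u, w) \<in> T then length fs else 0) + 1"
    using gs(5) \<sigma>\<tau>(6) by (simp add: fs'_def)
  have majority: "(x, y) \<in> T \<longleftrightarrow> wins fs' y x < wins fs' x y" if "x \<in> C" "y \<in> C" "x \<noteq> y" for x y
  proof -
    have flip: "(y, x) \<in> T \<longleftrightarrow> (x, y) \<notin> T"
      using tournament_flip[OF tour _ _ that(3)] sub that(1,2) by (auto simp: C_def)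
    have "x \<in> B \<and> y \<in> B \<or> x = u \<and> y \<in> B \<or> x \<in> B \<and> y = u \<or> x = w \<and> y \<in> B \<or>
        x \<in> B \<and> y = w \<or> x = u \<and> y = w \<or> x = w \<and> y = u"
      using that by (auto simp: C_def)
    then show ?thesis
      using old swap[OF that] wins_BB wins_uz wins_wz wins_uw len_fs flip that(3) new
      by (elim disjE) auto
  qed
  have "scores_generate C T fs'" unfolding scores_generate_def using inj' majority by blast
  then show ?thesis using len' unfolding C_def by blast
qed

lemma scores_generate_extend_ranking:
  assumes tour: "tournament A T" and "finite B" "S \<subseteq> B" "B \<subseteq> A"
    and rk: "ranking_of T S f" and "card (B - S) = 2 * p"
  shows "\<exists>fs. length fs = 2 * p + 1 \<and> scores_generate B T fs"
  using assms(2-4,6)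
proof (induction p arbitrary: B)
  case 0
  then have "B = S" by auto
  then show ?case using scores_generate_single[OF rk] by (intro exI[of _ "[f]"]) simp
next
  case (Suc p)
  have fin: "finite (B - S)" using Suc.prems(1) by simp
  obtain u where u: "u \<in> B - S"
    using Suc.prems(4) by (metis card.empty ex_in_conv mult_is_0 nat.distinct(1) zero_neq_numeral)
  then have "card (B - S - {u}) = 2 * p + 1" using Suc.prems(4) fin by simp
  then obtain w where w: "w \<in> B - S - {u}"
    by (metis card.empty ex_in_conv add_is_0 zero_neq_one)
  define B' where "B' = B - {u, w}"
  have "B' - S = B - S - {u} - {w}" by (auto simp: B'_def)
  then have card': "card (B' - S) = 2 * p"
    using \<open>card (B - S - {u}) = 2 * p + 1\<close> w fin by simp
  have uw: "u \<in> B - S" "w \<in> B - S" "u \<noteq> w" using u w by auto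
  have "finite B'" "S \<subseteq> B'" "B' \<subseteq> A" using Suc.prems uw by (auto simp: B'_def)
  then obtain fs where fs: "length fs = 2 * p + 1" "scores_generate B' T fs"
    using Suc.IH[OF _ _ _ card'] by blast
  have B: "B = insert u (insert w B')" using uw by (auto simp: B'_def)
  obtain fs' where "length fs' = length fs + 2" "scores_generate B T fs'"
    using scores_generate_insert_pair[OF tour _ \<open>finite B'\<close> _ _ uw(3) fs(2)] Suc.prems(3) fs(1)
    unfolding B by (auto simp: B'_def)
  then show ?case using fs(1) by (intro exI[of _ fs']) simp
qed

lemma voter_score_rel: "inj_on f A \<Longrightarrow> voter A (score_rel A f)"
  unfolding voter_def linear_order_on_def partial_order_on_def preorder_on_def refl_on_def
    trans_def antisym_def total_on_def score_rel_def inj_on_def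
  by auto

lemma n_prefer_score_rel:
  assumes "\<forall>f\<in>set fs. inj_on f A" "x \<in> A" "y \<in> A" "x \<noteq> y"
  shows "n_prefer (mset (map (score_rel A) fs)) x y = wins fs x y"
  using assms
proof (induction fs)
  case Nil
  then show ?case by (simp add: n_prefer_def wins_def)
next
  case (Cons f fs)
  have "f x \<noteq> f y" using Cons.prems by (auto dest: inj_onD)
  then have "(x, y) \<in> score_rel A f \<and> x \<noteq> y \<longleftrightarrow> f y < f x"
    using Cons.prems by (auto simp: score_rel_def)
  then show ?case using Cons by (simp add: n_prefer_def wins_def)
qed

lemma vT_le_length:
  assumes "scores_generate A T fs" "fs \<noteq> []"
  shows "vT A T \<le> length fs"
proof -
  define U where "U = mset (map (score_rel A) fs)"
  have inj: "\<forall>f\<in>set fs. inj_on f A" using assms(1) by (simp add: scores_generate_def)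
  have "U \<noteq> {#}" using assms(2) by (simp add: U_def)
  moreover have "\<forall>r\<in>#U. voter A r" using inj voter_score_rel by (auto simp: U_def)
  moreover have "\<forall>x\<in>A. \<forall>y\<in>A. x \<noteq> y \<longrightarrow> ((x, y) \<in> T \<longleftrightarrow> n_prefer U y x < n_prefer U x y)"
    using assms(1) n_prefer_score_rel[OF inj] by (simp add: scores_generate_def U_def)
  ultimately have "generates A U T" unfolding generates_def by blast
  then have "vT A T \<le> size U" unfolding vT_def by (auto intro: Least_le)
  then show ?thesis by (simp add: U_def)
qed

lemma vT_le_card_diff:
  assumes tour: "tournament A T" and "finite A" "2 ^ j \<le> card A" "even (card A - (j + 1))"
  shows "vT A T \<le> card A - j"
proof -
  obtain S f where S: "S \<subseteq> A" "card S = j + 1" "ranking_of T S f"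
    using tournament_transitive_subset[OF tour order_refl assms(2,3)] by blast
  have "j < card A" using less_exp[of j] assms(3) by linarith
  then have "card (A - S) = 2 * ((card A - (j + 1)) div 2)"
    using S assms(2,4) by (simp add: card_Diff_subset finite_subset)
  then obtain fs where "length fs = 2 * ((card A - (j + 1)) div 2) + 1" "scores_generate A T fs"
    using scores_generate_extend_ranking[OF tour assms(2) S(1) order_refl S(3)] by blast
  moreover have "2 * ((card A - (j + 1)) div 2) + 1 = card A - j"
    using assms(4) \<open>j < card A\<close> by simp
  ultimately show ?thesis using vT_le_length by fastforce
qed

lemma vn_le:
  assumes "\<And>T. tournament {0..<n} T \<Longrightarrow> vT {0..<n} T \<le> b"
  shows "vn n \<le> b"
proof -
  have "finite {T. tournament {0..<n} T}"
    by (rule finite_subset[of _ "Pow ({0..<n} \<times> {0..<n})"]) (auto simp: tournament_def)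
  moreover have "tournament {0..<n} {(x, y). x < n \<and> y < x}" by (auto simp: tournament_def)
  moreover have "{vT {0..<n} T | T. tournament {0..<n} T} = (\<lambda>T. vT {0..<n} T) ` {T. tournament {0..<n} T}"
    by auto
  ultimately show ?thesis unfolding vn_def using assms by (intro Max.boundedI) auto
qed

lemma vn_le_diff:
  assumes "2 ^ j \<le> n" "even (n - (j + 1))"
  shows "vn n \<le> n - j"
  using vT_le_card_diff[of "{0..<n}"] assms by (intro vn_le) simp

lemma floor_log2_bounds:
  fixes n k :: nat
  assumes "n \<ge> 2" "int k = \<lfloor>log 2 (real n)\<rfloor>"
  shows "2 ^ k \<le> n" "n < 2 ^ (k + 1)"
  using floor_log_nat_eq_powr_iff[of 2 n k] assms by auto

theorem mainTheorem3:
  fixes n k :: nat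
  assumes "n \<ge> 2"
    and "int k = \<lfloor>log 2 (real n)\<rfloor>"
  shows "(odd (n + k) \<longrightarrow> vn n \<le> n - k) \<and> (even (n + k) \<longrightarrow> vn n \<le> n - k + 1)"
proof -
  have pow: "2 ^ k \<le> n" and "n < 2 ^ (k + 1)" using floor_log2_bounds[OF assms] by auto
  have "k < n" using less_exp[of k] pow by linarith
  have "k \<ge> 1" using \<open>n < 2 ^ (k + 1)\<close> assms(1) by (cases k) auto
  have "vn n \<le> n - k" if "odd (n + k)"
    using vn_le_diff[OF pow] that \<open>k < n\<close> by (simp add: even_diff_nat)
  moreover have "vn n \<le> n - (k - 1)" if "even (n + k)"
  proof (rule vn_le_diff)
    show "2 ^ (k - 1) \<le> n" using pow by (meson diff_le_self order_trans one_le_numeral power_increasing)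
    show "even (n - (k - 1 + 1))" using that \<open>k \<ge> 1\<close> \<open>k < n\<close> by (simp add: even_diff_nat)
  qed
  ultimately show ?thesis using \<open>k \<ge> 1\<close> \<open>k < n\<close> by auto
qed

end
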